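(* Let $\mathbf{W}^0$ be a real $N\times N$ matrix, let $\mathbf{u}=(1,\dots,1)^T/\sqrt N\in\mathbb{R}^N$, $\mathbf{H}=\mathbf{u}\mathbf{u}^T$ and $\boldsymbol\Theta=\mathbf{I}-\mathbf{H}$, and for $n\ge1$ let $\mathbf{W}^\theta_n=(\mathbf{W}^0\boldsymbol\Theta)^{n-1}\mathbf{W}^0$. Then the motif cumulants of $\mathbf{W}^0$ satisfy, for all $n,m\ge1$, $$\kappa_n=\frac{1}{N^n}\,\mathbf{u}^T\mathbf{W}^\theta_n\mathbf{u}=\frac{1}{N^{n+1}}\sum_{i,j}\big((\mathbf{W}^0\boldsymbol\Theta)^{n-1}\mathbf{W}^0\big)_{ij},$$ $$\kappa_{n,m}=\frac{1}{N^{n+m}}\,\mathbf{u}^T\mathbf{W}^\theta_n\,\boldsymbol\Theta\,(\mathbf{W}^\theta_m)^T\mathbf{u}=\frac{1}{N^{n+m}}\,\mathbf{u}^T(\mathbf{W}^0\boldsymbol\Theta)^{n-1}\mathbf{W}^0\boldsymbol\Theta(\mathbf{W}^0)^T(\boldsymbol\Theta(\mathbf{W}^0)^T)^{m-1}\mathbf{u}.$$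
   Context: Notation: for an $N\times N$ matrix $\mathbf{X}$, $\langle\mathbf{X}\rangle=\frac1{N^2}\sum_{i,j}\mathbf{X}_{ij}$. Motif moments: for integers $n,m\ge0$, $\mu_{n,m}=\langle(\mathbf{W}^0)^n((\mathbf{W}^0)^T)^m\rangle/N^{n+m-1}$, and $\mu_n:=\mu_{n,0}$. A composition of a positive integer $n$ is an ordered tuple $(n_1,\dots,n_t)$ of positive integers with $n_1+\dots+n_t=n$; $\mathcal{C}(n)$ denotes the set of compositions of $n$. Motif cumulants: the numbers $\kappa_n$ ($n\ge1$) and $\kappa_{n,m}$ ($n,m\ge1$) are defined recursively (uniquely) by requiring, for all $n,m\ge1$, $$\mu_n=\sum_{(n_1,\dots,n_t)\in\mathcal{C}(n)}\prod_{i=1}^t\kappa_{n_i},\qquad \mu_{n,m}=\sum_{\substack{(n_1,\dots,n_t)\in\mathcal{C}(n)\\(m_1,\dots,m_s)\in\mathcal{C}(m)}}\Big(\prod_{i=2}^t\kappa_{n_i}\Big)\big(\kappa_{n_1,m_1}+\kappa_{n_1}\kappa_{m_1}\big)\Big(\prod_{j=2}^s\kappa_{m_j}\Big),$$ where an empty product equals $1$. *)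

theory Defs
  imports "HOL-Analysis.Analysis"
begin

primrec mpow :: "real^'n^'n \<Rightarrow> nat \<Rightarrow> real^'n^'n" where
  "mpow A 0 = mat 1"
| "mpow A (Suc k) = A ** mpow A k"

definition mavg :: "real^'n^'n \<Rightarrow> real" where
  "mavg X = (\<Sum>i\<in>UNIV. \<Sum>j\<in>UNIV. X $ i $ j) / (real CARD('n))^2"

definition motif_moment :: "real^'n^'n \<Rightarrow> nat \<Rightarrow> nat \<Rightarrow> real" where
  "motif_moment W n m =
     mavg (mpow W n ** mpow (transpose W) m) / (real CARD('n)) ^ (n + m - 1)"

definition compositions :: "nat \<Rightarrow> nat list set" where
  "compositions n = {c. (\<forall>x\<in>set c. 0 < x) \<and> sum_list c = n}"

definition cumulant_system ::
  "real^'n^'n \<Rightarrow> (nat \<Rightarrow> real) \<Rightarrow> (nat \<Rightarrow> nat \<Rightarrow> real) \<Rightarrow> bool" where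
  "cumulant_system W k k2 \<longleftrightarrow>
     (\<forall>n\<ge>1. motif_moment W n 0 =
          (\<Sum>c\<in>compositions n. prod_list (map k c))) \<and>
     (\<forall>n\<ge>1. \<forall>m\<ge>1. motif_moment W n m =
          (\<Sum>c\<in>compositions n. \<Sum>d\<in>compositions m.
              prod_list (map k (tl c)) * (k2 (hd c) (hd d) + k (hd c) * k (hd d))
              * prod_list (map k (tl d))))"

text \<open>The motif cumulants: the unique solution of the system (only indices >= 1
  are meaningful; values at index 0 are normalised to 0 to make the choice unique).\<close>
definition motif_cumulants :: "real^'n^'n \<Rightarrow> (nat \<Rightarrow> real) \<times> (nat \<Rightarrow> nat \<Rightarrow> real)" where
  "motif_cumulants W = (THE p. cumulant_system W (fst p) (snd p) \<and> fst p 0 = 0 \<and>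
       (\<forall>n m. (n = 0 \<or> m = 0) \<longrightarrow> snd p n m = 0))"

definition kappa1 :: "real^'n^'n \<Rightarrow> nat \<Rightarrow> real" where
  "kappa1 W n = fst (motif_cumulants W) n"

definition kappa2 :: "real^'n^'n \<Rightarrow> nat \<Rightarrow> nat \<Rightarrow> real" where
  "kappa2 W n m = snd (motif_cumulants W) n m"

definition uvec :: "real^'n" where
  "uvec = (\<chi> i. 1 / sqrt (real CARD('n)))"

definition Hmat :: "real^'n^'n" where
  "Hmat = (\<chi> i j. uvec $ i * uvec $ j)"

definition Theta :: "real^'n^'n" where
  "Theta = mat 1 - Hmat"

definition Wtheta :: "real^'n^'n \<Rightarrow> nat \<Rightarrow> real^'n^'n" where
  "Wtheta W n = mpow (W ** Theta) (n - 1) ** W"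

end

theory Submission
  imports Defs
begin

text \<open>Write \<open>1\<close> for the all-ones vector, so that \<open>H = 1 1^T / N\<close>. Expanding every factor
  \<open>W = W Theta + W H\<close> of \<open>1^T W^n\<close> gives \<open>1^T W^n / N^n = \<Sum>k. mu_(n-k) sigma_k\<close>, where
  \<open>sigma_k = 1^T W^theta_k / N^k\<close> and \<open>mu_0 = 1\<close>. Pairing with \<open>1\<close>, respectively with
  \<open>1^T W^m / N^m\<close>, shows that the motif moments satisfy the composition-sum recursions with
  \<open>kappa_k = sigma_k \<bullet> 1 / N\<close> and \<open>kappa_(k,l) = sigma_k \<bullet> sigma_l / N - kappa_k kappa_l\<close>.
  The recursions are triangular, so they have only this solution; and
  \<open>sigma_k \<bullet> sigma_l - (sigma_k \<bullet> 1) (sigma_l \<bullet> 1) / N\<close> is the \<open>Theta\<close>-weighted form of the statement.\<close>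

lemma length_le_sum_list_pos: "\<forall>x\<in>set c. 0 < (x::nat) \<Longrightarrow> length c \<le> sum_list c"
  by (induction c) (auto simp: Suc_le_eq)

lemma finite_compositions: "finite (compositions n)"
proof (rule finite_subset)
  show "compositions n \<subseteq> {c. set c \<subseteq> {..n} \<and> length c \<le> n}"
    unfolding compositions_def using length_le_sum_list_pos member_le_sum_list by fastforce
  show "finite {c. set c \<subseteq> {..n} \<and> length c \<le> n}"
    by (rule finite_lists_length_le) simp
qed

lemma compositions_0: "compositions 0 = {[]}"
  unfolding compositions_def by auto (metis neq_Nil_conv list.set_intros(1) less_irrefl)

lemma compositions_eq_UN_Cons:
  assumes "n \<ge> 1"
  shows "compositions n = (\<Union>k\<in>{1..n}. Cons k ` compositions (n - k))"
proof (intro equalityI subsetI)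
  fix c assume c: "c \<in> compositions n"
  with assms obtain k c' where "c = k # c'"
    unfolding compositions_def by (cases c) auto
  moreover from c this have "k \<in> {1..n}" "c' \<in> compositions (n - k)"
    unfolding compositions_def by auto
  ultimately show "c \<in> (\<Union>k\<in>{1..n}. Cons k ` compositions (n - k))"
    by blast
qed (auto simp: compositions_def)

lemma sum_compositions_Cons:
  assumes "n \<ge> 1"
  shows "(\<Sum>c\<in>compositions n. g c) = (\<Sum>k\<in>{1..n}. \<Sum>c\<in>compositions (n - k). g (k # c))"
proof -
  have "(\<Sum>c\<in>compositions n. g c) = (\<Sum>k\<in>{1..n}. \<Sum>c\<in>Cons k ` compositions (n - k). g c)"
    unfolding compositions_eq_UN_Cons[OF assms]
    by (rule sum.UNION_disjoint) (auto simp: finite_compositions)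
  also have "\<dots> = (\<Sum>k\<in>{1..n}. \<Sum>c\<in>compositions (n - k). g (k # c))"
    by (simp add: sum.reindex)
  finally show ?thesis .
qed

definition composition_sum :: "(nat \<Rightarrow> 'a::comm_semiring_1) \<Rightarrow> nat \<Rightarrow> 'a" where
  "composition_sum k n = (\<Sum>c\<in>compositions n. prod_list (map k c))"

lemma composition_sum_0 [simp]: "composition_sum k 0 = 1"
  by (simp add: composition_sum_def compositions_0)

lemma composition_sum_rec:
  "n \<ge> 1 \<Longrightarrow> composition_sum k n = (\<Sum>a\<in>{1..n}. k a * composition_sum k (n - a))"
  unfolding composition_sum_def by (subst sum_compositions_Cons) (simp_all add: sum_distrib_left)

lemma sum_compositions_pair:
  fixes k :: "nat \<Rightarrow> 'a::comm_semiring_1"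
  assumes "n \<ge> 1" "m \<ge> 1"
  shows "(\<Sum>c\<in>compositions n. \<Sum>d\<in>compositions m.
            prod_list (map k (tl c)) * g (hd c) (hd d) * prod_list (map k (tl d)))
       = (\<Sum>a\<in>{1..n}. \<Sum>b\<in>{1..m}. composition_sum k (n - a) * g a b * composition_sum k (m - b))"
proof -
  have "composition_sum k (n - a) * g a b * composition_sum k (m - b) =
        (\<Sum>c\<in>compositions (n - a). \<Sum>d\<in>compositions (m - b).
            prod_list (map k c) * g a b * prod_list (map k d))" for a b
  proof -
    have "composition_sum k (n - a) * g a b * composition_sum k (m - b) =
        (\<Sum>c\<in>compositions (n - a). prod_list (map k c) * g a b) * composition_sum k (m - b)"
      by (simp add: composition_sum_def sum_distrib_right)
    then show ?thesis
      unfolding composition_sum_def sum_product by simp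
  qed
  then show ?thesis
    by (simp add: sum_compositions_Cons[OF assms(1)] sum_compositions_Cons[OF assms(2)])
       (intro sum.cong refl, rule sum.swap)
qed

text \<open>A triangular convolution system determines its unknowns: the equation for index \<open>n\<close>
  involves \<open>k n\<close> only through the term \<open>k n * mt 0\<close>, all other terms having smaller index.\<close>

lemma convolution_eq_imp_eq:
  fixes k k' mt :: "nat \<Rightarrow> 'a::idom"
  assumes conv: "\<And>n. n \<ge> 1 \<Longrightarrow> (\<Sum>a\<in>{1..n}. k a * mt (n - a)) = (\<Sum>a\<in>{1..n}. k' a * mt (n - a))"
    and "mt 0 \<noteq> 0" and "n \<ge> 1"
  shows "k n = k' n"
  using \<open>n \<ge> 1\<close>
proof (induction n rule: less_induct)
  case (less n)
  have split: "sum f {1..n} = f n + sum f {1..<n}" for f :: "nat \<Rightarrow> 'a"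
    using less.prems
    by (simp add: atLeastLessThanSuc_atLeastAtMost[symmetric] sum.atLeast_Suc_lessThan_Suc_shift)
  have "(\<Sum>a\<in>{1..<n}. k a * mt (n - a)) = (\<Sum>a\<in>{1..<n}. k' a * mt (n - a))"
    using less.IH by (intro sum.cong) auto
  with conv[OF less.prems] have "k n * mt 0 = k' n * mt 0"
    unfolding split by simp
  with \<open>mt 0 \<noteq> 0\<close> show ?case by simp
qed

lemma bilinear_convolution_eq_imp_eq:
  fixes T T' :: "nat \<Rightarrow> nat \<Rightarrow> 'a::idom" and mt :: "nat \<Rightarrow> 'a"
  assumes conv: "\<And>n m. n \<ge> 1 \<Longrightarrow> m \<ge> 1 \<Longrightarrow>
      (\<Sum>a\<in>{1..n}. \<Sum>b\<in>{1..m}. mt (n - a) * T a b * mt (m - b)) =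
      (\<Sum>a\<in>{1..n}. \<Sum>b\<in>{1..m}. mt (n - a) * T' a b * mt (m - b))"
    and "mt 0 \<noteq> 0" and "n \<ge> 1" and "m \<ge> 1"
  shows "T n m = T' n m"
  using assms(3,4)
proof (induction "n + m" arbitrary: n m rule: less_induct)
  case less
  define f where "f a b = mt (n - a) * (T a b - T' a b) * mt (m - b)" for a b
  have f_off_diagonal: "f a b = 0" if "a \<in> {1..n}" "b \<in> {1..m}" "a \<noteq> n \<or> b \<noteq> m" for a b
  proof -
    from that have "T a b = T' a b" using less.hyps by auto
    then show ?thesis by (simp add: f_def)
  qed
  have "(\<Sum>a\<in>{1..n}. \<Sum>b\<in>{1..m}. f a b) = (\<Sum>a\<in>{1..n}. if a = n then f n m else 0)"
  proof (intro sum.cong refl)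
    fix a assume a: "a \<in> {1..n}"
    have "(\<Sum>b\<in>{1..m}. f a b) = (\<Sum>b\<in>{1..m}. if a = n \<and> b = m then f n m else 0)"
      using f_off_diagonal[OF a] by (intro sum.cong) auto
    then show "(\<Sum>b\<in>{1..m}. f a b) = (if a = n then f n m else 0)"
      using less.prems by simp
  qed
  also have "\<dots> = f n m"
    using less.prems by simp
  finally have "(\<Sum>a\<in>{1..n}. \<Sum>b\<in>{1..m}. f a b) = f n m" .
  moreover have "(\<Sum>a\<in>{1..n}. \<Sum>b\<in>{1..m}. f a b) = 0"
    using conv[OF less.prems] by (simp add: f_def algebra_simps sum_subtractf)
  ultimately have "f n m = 0" by simp
  with \<open>mt 0 \<noteq> 0\<close> show ?case by (simp add: f_def)
qed

lemma cumulant_system_convolution: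
  assumes "cumulant_system W k k2"
  shows "n \<ge> 1 \<Longrightarrow> (\<Sum>a\<in>{1..n}. k a * composition_sum k (n - a)) = motif_moment W n 0"
    and "n \<ge> 1 \<Longrightarrow> m \<ge> 1 \<Longrightarrow>
      (\<Sum>a\<in>{1..n}. \<Sum>b\<in>{1..m}.
         composition_sum k (n - a) * (k2 a b + k a * k b) * composition_sum k (m - b))
      = motif_moment W n m"
proof -
  show "(\<Sum>a\<in>{1..n}. k a * composition_sum k (n - a)) = motif_moment W n 0" if "n \<ge> 1"
    using assms that
    by (subst composition_sum_rec[OF that, symmetric]) (simp add: cumulant_system_def composition_sum_def)
  show "(\<Sum>a\<in>{1..n}. \<Sum>b\<in>{1..m}.
         composition_sum k (n - a) * (k2 a b + k a * k b) * composition_sum k (m - b))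
      = motif_moment W n m" if "n \<ge> 1" "m \<ge> 1"
    using assms that
    by (subst sum_compositions_pair[OF that, symmetric]) (simp add: cumulant_system_def)
qed

lemma cumulant_system_unique:
  assumes S: "cumulant_system W k k2" and S': "cumulant_system W k' k2'"
  shows "n \<ge> 1 \<Longrightarrow> k n = k' n" and "n \<ge> 1 \<Longrightarrow> m \<ge> 1 \<Longrightarrow> k2 n m = k2' n m"
proof -
  have P_eq: "composition_sum k j = composition_sum k' j" for j
    using S S' by (cases "j = 0") (simp_all add: cumulant_system_def composition_sum_def compositions_0)
  show k_eq: "k n = k' n" if "n \<ge> 1" for n
    using convolution_eq_imp_eq[where mt = "composition_sum k"] that
      cumulant_system_convolution(1)[OF S] cumulant_system_convolution(1)[OF S'] P_eq
    by simp
  show "k2 n m = k2' n m" if "n \<ge> 1" "m \<ge> 1"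
    using bilinear_convolution_eq_imp_eq[where mt = "composition_sum k"
        and T = "\<lambda>a b. k2 a b + k a * k b" and T' = "\<lambda>a b. k2' a b + k' a * k' b"] that
      cumulant_system_convolution(2)[OF S] cumulant_system_convolution(2)[OF S'] P_eq k_eq
    by simp
qed

lemma uvec_eq_scaleR_one: "(uvec :: real^'n) = (1 / sqrt (real CARD('n))) *\<^sub>R 1"
  by (simp add: uvec_def vec_eq_iff)

lemma vector_matrix_Hmat: "y v* (Hmat :: real^'n^'n) = ((y \<bullet> 1) / real CARD('n)) *\<^sub>R 1"
proof -
  have "uvec $ i * uvec $ j = 1 / real CARD('n)" for i j :: 'n
    by (simp add: uvec_def)
  then show ?thesis
    by (simp add: vector_matrix_mult_def Hmat_def inner_vec_def vec_eq_iff sum_divide_distrib)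
qed

lemma vector_matrix_Theta: "y v* (Theta :: real^'n^'n) = y - ((y \<bullet> 1) / real CARD('n)) *\<^sub>R 1"
  by (simp add: Theta_def vector_matrix_mult_diff_rdistrib vector_matrix_Hmat)

lemma transpose_Theta: "transpose (Theta :: real^'n^'n) = Theta"
  by (simp add: Theta_def Hmat_def transpose_def mat_def vec_eq_iff mult.commute)

lemma mpow_Suc_right: "mpow A (Suc k) = mpow A k ** A"
  by (induction k) (simp_all add: matrix_mul_assoc)

lemma transpose_mpow: "transpose (mpow A k) = mpow (transpose A) k"
  by (induction k) (simp_all add: matrix_transpose_mul mpow_Suc_right[symmetric])

lemma sum_entries_eq_inner: "(\<Sum>i\<in>UNIV. \<Sum>j\<in>UNIV. (A :: real^'n^'n) $ i $ j) = (1 v* A) \<bullet> 1"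
  by (simp add: vector_matrix_mult_def inner_vec_def) (rule sum.swap)

lemma sum_entries_matrix_mul_transpose:
  "(\<Sum>i\<in>UNIV. \<Sum>j\<in>UNIV. ((A :: real^'n^'n) ** transpose B) $ i $ j) = (1 v* A) \<bullet> (1 v* B)"
proof -
  have "(1 v* A) \<bullet> (1 v* B) = (\<Sum>k\<in>UNIV. \<Sum>i\<in>UNIV. \<Sum>j\<in>UNIV. A$i$k * B$j$k)"
    by (simp add: vector_matrix_mult_def inner_vec_def sum_product)
  also have "\<dots> = (\<Sum>i\<in>UNIV. \<Sum>j\<in>UNIV. \<Sum>k\<in>UNIV. A$i$k * B$j$k)"
    by (subst sum.swap) (rule sum.cong[OF refl], rule sum.swap)
  finally show ?thesis
    by (simp add: matrix_matrix_mult_def transpose_def)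
qed

lemma inner_uvec_matrix_vector:
  "(uvec :: real^'n) \<bullet> ((A :: real^'n^'n) *v uvec) = ((1 v* A) \<bullet> 1) / real CARD('n)"
  by (simp add: uvec_eq_scaleR_one dot_lmul_matrix[symmetric] matrix_vector_mult_scaleR
      scaleR_vector_matrix_assoc)

lemma matrix_mul_Theta_Wtheta: "W ** Theta ** Wtheta W (Suc n) = Wtheta W (Suc (Suc n))"
  by (simp add: Wtheta_def matrix_mul_assoc)

lemma vector_matrix_W_Wtheta:
  fixes W :: "real^'n^'n"
  shows "x v* (W ** Wtheta W (Suc n)) =
    x v* Wtheta W (Suc (Suc n)) + (((x v* W) \<bullet> 1) / real CARD('n)) *\<^sub>R (1 v* Wtheta W (Suc n))"
proof -
  have "x v* (W ** Wtheta W (Suc n)) = ((x v* W) v* (Theta + Hmat)) v* Wtheta W (Suc n)"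
    by (simp add: Theta_def vector_matrix_mul_assoc)
  also have "\<dots> = ((x v* W) v* Theta) v* Wtheta W (Suc n) + ((x v* W) v* Hmat) v* Wtheta W (Suc n)"
    by (simp add: vector_matrix_mult_add_rdistrib vector_matrix_left_distrib)
  also have "((x v* W) v* Theta) v* Wtheta W (Suc n) = x v* Wtheta W (Suc (Suc n))"
    by (simp add: vector_matrix_mul_assoc matrix_mul_Theta_Wtheta[symmetric])
  finally show ?thesis
    by (simp add: vector_matrix_Hmat scaleR_vector_matrix_assoc)
qed

text \<open>Expanding \<open>W = W Theta + W H\<close> and splitting each term at its rightmost \<open>H\<close> gives
  \<open>W^(n+1) = W^theta_(n+1) + (\<Sum>k. W^(n+1-k) H W^theta_k)\<close>; applied to a row vector, the
  rank-one \<open>H\<close> turns the left part into a scalar.\<close>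

lemma vector_matrix_mpow_expansion:
  fixes W :: "real^'n^'n"
  shows "x v* mpow W (Suc n) = x v* Wtheta W (Suc n) +
    (\<Sum>k\<in>{1..n}. (((x v* mpow W (Suc n - k)) \<bullet> 1) / real CARD('n)) *\<^sub>R (1 v* Wtheta W k))"
proof (induction n arbitrary: x)
  case 0
  show ?case by (simp add: Wtheta_def)
next
  case (Suc n)
  have shift: "(x v* W) v* mpow W (Suc n - k) = x v* mpow W (Suc (Suc n) - k)" if "k \<in> {1..n}" for k
    using that by (simp add: vector_matrix_mul_assoc Suc_diff_le)
  have "x v* mpow W (Suc (Suc n)) = (x v* W) v* mpow W (Suc n)"
    by (simp add: vector_matrix_mul_assoc)
  also have "\<dots> = (x v* W) v* Wtheta W (Suc n) +
      (\<Sum>k\<in>{1..n}. (((x v* mpow W (Suc (Suc n) - k)) \<bullet> 1) / real CARD('n)) *\<^sub>R (1 v* Wtheta W k))"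
    using Suc.IH[of "x v* W"] shift by simp
  also have "(x v* W) v* Wtheta W (Suc n) = x v* Wtheta W (Suc (Suc n)) +
      (((x v* mpow W (Suc (Suc n) - Suc n)) \<bullet> 1) / real CARD('n)) *\<^sub>R (1 v* Wtheta W (Suc n))"
    by (simp add: vector_matrix_mul_assoc vector_matrix_W_Wtheta)
  finally show ?case by (simp add: add.assoc)
qed

lemma inner_one_mult_Theta_transpose:
  "(1 v* (A ** Theta ** transpose B)) \<bullet> 1 =
     (1 v* A) \<bullet> (1 v* B) - ((1 v* A) \<bullet> 1) * ((1 v* B) \<bullet> 1) / real CARD('n)"
  for A B :: "real^'n^'n"
proof -
  have "(1 v* (A ** Theta ** transpose B)) \<bullet> 1 = (1 v* B) \<bullet> ((1 v* A) v* Theta)"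
    by (simp add: vector_matrix_mul_assoc[symmetric] dot_lmul_matrix inner_commute)
  then show ?thesis
    by (simp add: vector_matrix_Theta inner_diff_right inner_commute)
qed

lemma Wtheta_Theta_transpose_Wtheta:
  "Wtheta W n ** Theta ** transpose (Wtheta W m) =
     mpow (W ** Theta) (n - 1) ** W ** Theta ** transpose W ** mpow (Theta ** transpose W) (m - 1)"
  by (simp add: Wtheta_def matrix_transpose_mul transpose_mpow transpose_Theta matrix_mul_assoc)

context
  fixes W :: "real^'n^'n"
begin

text \<open>\<open>theta_row\<close> and \<open>moment_seq\<close> are the \<open>sigma\<close> and \<open>mu\<close> of the header.\<close>

definition theta_row :: "nat \<Rightarrow> real^'n" where
  "theta_row n = (1 / real CARD('n) ^ n) *\<^sub>R (1 v* Wtheta W n)"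

definition moment_row :: "nat \<Rightarrow> real^'n" where
  "moment_row n = (1 / real CARD('n) ^ n) *\<^sub>R (1 v* mpow W n)"

definition moment_seq :: "nat \<Rightarrow> real" where
  "moment_seq n = (if n = 0 then 1 else motif_moment W n 0)"

definition theta_cumulant :: "nat \<Rightarrow> real" where
  "theta_cumulant n = (if n = 0 then 0 else (theta_row n \<bullet> 1) / real CARD('n))"

definition theta_cumulant2 :: "nat \<Rightarrow> nat \<Rightarrow> real" where
  "theta_cumulant2 n m = (if n = 0 \<or> m = 0 then 0
     else (theta_row n \<bullet> theta_row m) / real CARD('n) - theta_cumulant n * theta_cumulant m)"

lemma motif_moment_eq_inner_moment_row:
  "n \<ge> 1 \<Longrightarrow> motif_moment W n 0 = (moment_row n \<bullet> 1) / real CARD('n)"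
  by (cases n) (simp_all add: motif_moment_def mavg_def sum_entries_eq_inner moment_row_def
      power2_eq_square field_simps)

lemma motif_moment_eq_inner_moment_rows:
  "n \<ge> 1 \<Longrightarrow> motif_moment W n m = (moment_row n \<bullet> moment_row m) / real CARD('n)"
  by (cases n) (simp_all add: motif_moment_def mavg_def transpose_mpow[symmetric]
      sum_entries_matrix_mul_transpose moment_row_def power2_eq_square field_simps power_add)

lemma moment_row_expansion:
  assumes "n \<ge> 1"
  shows "moment_row n = (\<Sum>k\<in>{1..n}. moment_seq (n - k) *\<^sub>R theta_row k)"
proof -
  let ?N = "real CARD('n)"
  obtain j where j: "n = Suc j" using assms by (cases n) auto
  have summand: "(1 / ?N ^ Suc j) *\<^sub>R (((1 v* mpow W (Suc j - k)) \<bullet> 1 / ?N) *\<^sub>R (1 v* Wtheta W k))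
      = moment_seq (Suc j - k) *\<^sub>R theta_row k" if "k \<in> {1..j}" for k
  proof -
    have "moment_seq (Suc j - k) = (1 v* mpow W (Suc j - k)) \<bullet> 1 / ?N ^ (Suc j - k) / ?N"
      using motif_moment_eq_inner_moment_row[of "Suc j - k"] that
      by (auto simp: moment_seq_def moment_row_def)
    moreover have "?N ^ Suc j = ?N ^ (Suc j - k) * ?N ^ k"
      using that by (simp add: power_add[symmetric])
    ultimately show ?thesis by (simp add: theta_row_def)
  qed
  have "moment_row (Suc j) = theta_row (Suc j) +
      (\<Sum>k\<in>{1..j}. (1 / ?N ^ Suc j) *\<^sub>R (((1 v* mpow W (Suc j - k)) \<bullet> 1 / ?N) *\<^sub>R (1 v* Wtheta W k)))"
    unfolding moment_row_def theta_row_def vector_matrix_mpow_expansion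
    by (simp add: scaleR_add_right scaleR_sum_right)
  also have "\<dots> = (\<Sum>k\<in>{1..Suc j}. moment_seq (Suc j - k) *\<^sub>R theta_row k)"
    using summand by (simp add: moment_seq_def add.commute)
  finally show ?thesis unfolding j .
qed

lemma motif_moment_eq_convolution:
  "n \<ge> 1 \<Longrightarrow> motif_moment W n 0 = (\<Sum>a\<in>{1..n}. theta_cumulant a * moment_seq (n - a))"
  by (simp add: motif_moment_eq_inner_moment_row moment_row_expansion inner_sum_left
      sum_divide_distrib theta_cumulant_def mult.commute)

lemma motif_moment2_eq_convolution:
  "n \<ge> 1 \<Longrightarrow> m \<ge> 1 \<Longrightarrow> motif_moment W n m =
     (\<Sum>a\<in>{1..n}. \<Sum>b\<in>{1..m}.
        moment_seq (n - a) * (theta_row a \<bullet> theta_row b / real CARD('n)) * moment_seq (m - b))"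
  by (simp add: motif_moment_eq_inner_moment_rows moment_row_expansion inner_sum_left inner_sum_right
      sum_distrib_left sum_divide_distrib mult_ac) (rule sum.swap)

lemma composition_sum_theta_cumulant: "composition_sum theta_cumulant n = moment_seq n"
proof (induction n rule: less_induct)
  case (less n)
  show ?case
  proof (cases "n = 0")
    case False
    then have "composition_sum theta_cumulant n = (\<Sum>a\<in>{1..n}. theta_cumulant a * moment_seq (n - a))"
      using less.IH by (simp add: composition_sum_rec)
    with False show ?thesis by (simp add: motif_moment_eq_convolution moment_seq_def)
  qed (simp add: moment_seq_def)
qed

lemma cumulant_system_theta_cumulant: "cumulant_system W theta_cumulant theta_cumulant2"
  unfolding cumulant_system_def
proof (intro conjI allI impI)
  fix n m :: nat
  assume "n \<ge> 1"
  then show "motif_moment W n 0 = (\<Sum>c\<in>compositions n. prod_list (map theta_cumulant c))"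
    using composition_sum_theta_cumulant[of n] by (simp add: composition_sum_def moment_seq_def)
  assume "m \<ge> 1"
  have "(\<Sum>c\<in>compositions n. \<Sum>d\<in>compositions m.
      prod_list (map theta_cumulant (tl c)) *
      (theta_cumulant2 (hd c) (hd d) + theta_cumulant (hd c) * theta_cumulant (hd d)) *
      prod_list (map theta_cumulant (tl d))) =
    (\<Sum>a\<in>{1..n}. \<Sum>b\<in>{1..m}.
      moment_seq (n - a) * (theta_cumulant2 a b + theta_cumulant a * theta_cumulant b) * moment_seq (m - b))"
    by (subst sum_compositions_pair[OF \<open>n \<ge> 1\<close> \<open>m \<ge> 1\<close>])
       (simp add: composition_sum_theta_cumulant)
  also have "\<dots> = motif_moment W n m"
    unfolding motif_moment2_eq_convolution[OF \<open>n \<ge> 1\<close> \<open>m \<ge> 1\<close>]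
    by (intro sum.cong refl) (simp add: theta_cumulant2_def)
  finally show "motif_moment W n m = (\<Sum>c\<in>compositions n. \<Sum>d\<in>compositions m.
      prod_list (map theta_cumulant (tl c)) *
      (theta_cumulant2 (hd c) (hd d) + theta_cumulant (hd c) * theta_cumulant (hd d)) *
      prod_list (map theta_cumulant (tl d)))" ..
qed

lemma motif_cumulants_eq_theta_cumulant: "motif_cumulants W = (theta_cumulant, theta_cumulant2)"
  unfolding motif_cumulants_def
proof (rule the_equality)
  fix p :: "(nat \<Rightarrow> real) \<times> (nat \<Rightarrow> nat \<Rightarrow> real)"
  assume p: "cumulant_system W (fst p) (snd p) \<and> fst p 0 = 0 \<and>
    (\<forall>n m. n = 0 \<or> m = 0 \<longrightarrow> snd p n m = 0)"
  have "fst p n = theta_cumulant n" for n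
    using p cumulant_system_unique(1)[OF _ cumulant_system_theta_cumulant, of "fst p" "snd p" n]
    by (cases "n = 0") (simp_all add: theta_cumulant_def)
  moreover have "snd p n m = theta_cumulant2 n m" for n m
    using p cumulant_system_unique(2)[OF _ cumulant_system_theta_cumulant, of "fst p" "snd p" n m]
    by (cases "n = 0 \<or> m = 0") (auto simp: theta_cumulant2_def)
  ultimately show "p = (theta_cumulant, theta_cumulant2)"
    by (simp add: prod_eq_iff fun_eq_iff)
qed (simp add: cumulant_system_theta_cumulant theta_cumulant_def theta_cumulant2_def)

lemma theta_cumulant_eq_uvec_form:
  "n \<ge> 1 \<Longrightarrow> theta_cumulant n = uvec \<bullet> (Wtheta W n *v uvec) / real CARD('n) ^ n"
  by (simp add: theta_cumulant_def theta_row_def inner_uvec_matrix_vector field_simps)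

lemma theta_cumulant_eq_sum_entries:
  "n \<ge> 1 \<Longrightarrow> theta_cumulant n =
     (\<Sum>i\<in>UNIV. \<Sum>j\<in>UNIV. (mpow (W ** Theta) (n - 1) ** W) $ i $ j) / real CARD('n) ^ (n + 1)"
  by (simp add: theta_cumulant_def theta_row_def sum_entries_eq_inner Wtheta_def field_simps)

lemma theta_cumulant2_eq_uvec_form:
  "n \<ge> 1 \<Longrightarrow> m \<ge> 1 \<Longrightarrow> theta_cumulant2 n m =
     uvec \<bullet> ((Wtheta W n ** Theta ** transpose (Wtheta W m)) *v uvec) / real CARD('n) ^ (n + m)"
  by (simp add: theta_cumulant2_def theta_cumulant_def theta_row_def inner_uvec_matrix_vector
      inner_one_mult_Theta_transpose field_simps power_add)

end

theorem mainTheorem2: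
  fixes W :: "real^'n^'n"
  defines "N \<equiv> real CARD('n)"
  shows "(\<forall>n\<ge>1.
            kappa1 W n = (uvec \<bullet> (Wtheta W n *v uvec)) / N ^ n \<and>
            kappa1 W n = (\<Sum>i\<in>UNIV. \<Sum>j\<in>UNIV. (mpow (W ** Theta) (n - 1) ** W) $ i $ j)
                           / N ^ (n + 1))
       \<and> (\<forall>n\<ge>1. \<forall>m\<ge>1.
            kappa2 W n m =
              (uvec \<bullet> ((Wtheta W n ** Theta ** transpose (Wtheta W m)) *v uvec)) / N ^ (n + m) \<and>
            kappa2 W n m =
              (uvec \<bullet> ((mpow (W ** Theta) (n - 1) ** W ** Theta ** transpose W
                          ** mpow (Theta ** transpose W) (m - 1)) *v uvec)) / N ^ (n + m))"
proof -
  have "kappa1 W = theta_cumulant W" and "kappa2 W = theta_cumulant2 W"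
    by (simp_all add: kappa1_def kappa2_def motif_cumulants_eq_theta_cumulant fun_eq_iff)
  then show ?thesis
    unfolding N_def Wtheta_Theta_transpose_Wtheta[symmetric]
    by (simp add: theta_cumulant_eq_uvec_form[where W = W, symmetric]
        theta_cumulant_eq_sum_entries[where W = W]
        theta_cumulant2_eq_uvec_form[where W = W, symmetric])
qed

end
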